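(* For any nested expression $F$ and any consistent sets of explicit literals $H\subseteq T$: (i) $H\models F^T$ iff ($T\models F$ and $H\models F^T_+$); (ii) $H=\!\!|\;F^T$ iff ($T=\!\!|\;F$ and $H=\!\!|\;F^T_-$).
   Context: Fix a set $\mathit{At}$ of atoms. An explicit literal is $p$ or $\sim p$; a set of explicit literals is consistent if it never contains both $p$ and $\sim p$. Formulas: $\varphi ::= p\mid\bot\mid\varphi\wedge\varphi\mid\varphi\vee\varphi\mid\varphi\to\varphi\mid\sim\varphi$ with $\neg\varphi:=\varphi\to\bot$, $\top:=\neg\bot$. Nested expressions are the formulas built from $\top,\bot$, atoms, $\wedge,\vee,\neg,\sim$. Classical satisfaction/falsification by a consistent set $T$: $T\not\models\bot$, $T=\!\!|\;\bot$; $T\models p$ iff $p\in T$, $T=\!\!|\;p$ iff $\sim p\in T$; $\wedge$: satisfied iff both, falsified iff at least one falsified; $\vee$: satisfied iff at least one, falsified iff both falsified; $T\models\sim\varphi$ iff $T=\!\!|\;\varphi$, $T=\!\!|\;\sim\varphi$ iff $T\models\varphi$; $T\models\varphi\to\psi$ iff $T\not\models\varphi$ or $T\models\psi$, $T=\!\!|\;\varphi\to\psi$ iff $T\models\varphi$ and $T=\!\!|\;\psi$ (so $T\models\neg\varphi$ iff $T\not\models\varphi$, $T=\!\!|\;\neg\varphi$ iff $T\models\varphi$; $T\models\top$ and $T$ does not falsify $\top$). Reduct of nested expressions: $\top^T=\top$, $\bot^T=\bot$, $p^T=p$, $(F\wedge G)^T=F^T\wedge G^T$, $(F\vee G)^T=F^T\vee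 G^T$, $(\sim F)^T=\sim(F^T)$, $(\neg F)^T=\bot$ if $T\models F$, $\top$ otherwise. Transformations $\varphi^T_+$, $\varphi^T_-$ (clauses for $\neg\alpha$ take priority over those for $\to$): $\varphi^T_+=\bot$ if $T\not\models\varphi$; otherwise $p^T_+=p$; $(\alpha\otimes\beta)^T_+=\alpha^T_+\otimes\beta^T_+$ for $\otimes\in\{\wedge,\vee\}$; $(\alpha\to\beta)^T_+=\neg(\alpha^T_+)\vee\beta^T_+$; $(\neg\alpha)^T_+=\neg(\alpha^T_+)$; $(\sim\alpha)^T_+=\sim(\alpha^T_-)$. $\varphi^T_-=\top$ if $T$ does not falsify $\varphi$; otherwise $p^T_-=p$; $\bot^T_-=\bot$; $(\alpha\otimes\beta)^T_-=\alpha^T_-\otimes\beta^T_-$; $(\alpha\to\beta)^T_-=\beta^T_-$; $(\neg\alpha)^T_-=\bot$; $(\sim\alpha)^T_-=\sim(\alpha^T_+)$. *)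

theory Defs
  imports Main
begin

datatype 'a form =
    Atom 'a
  | Bot
  | And "'a form" "'a form"
  | Or "'a form" "'a form"
  | Imp "'a form" "'a form"
  | SNeg "'a form"

definition Neg :: "'a form \<Rightarrow> 'a form" where
  "Neg \<phi> = Imp \<phi> Bot"

definition Top :: "'a form" where
  "Top = Neg Bot"

(* explicit literals: p  or  \<sim>p *)
datatype 'a lit = PosL 'a | NegL 'a

definition consistent :: "'a lit set \<Rightarrow> bool" where
  "consistent T \<longleftrightarrow> \<not> (\<exists>p. PosL p \<in> T \<and> NegL p \<in> T)"

fun nested :: "'a form \<Rightarrow> bool" where
  "nested (Atom p) = True"
| "nested Bot = True"
| "nested (And F G) = (nested F \<and> nested G)"
| "nested (Or F G) = (nested F \<and> nested G)"
| "nested (Imp F G) = (nested F \<and> G = Bot)"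
| "nested (SNeg F) = nested F"

fun sat :: "'a lit set \<Rightarrow> 'a form \<Rightarrow> bool"
and fals :: "'a lit set \<Rightarrow> 'a form \<Rightarrow> bool" where
  "sat T Bot = False"
| "sat T (Atom p) = (PosL p \<in> T)"
| "sat T (And a b) = (sat T a \<and> sat T b)"
| "sat T (Or a b) = (sat T a \<or> sat T b)"
| "sat T (Imp a b) = (\<not> sat T a \<or> sat T b)"
| "sat T (SNeg a) = fals T a"
| "fals T Bot = True"
| "fals T (Atom p) = (NegL p \<in> T)"
| "fals T (And a b) = (fals T a \<or> fals T b)"
| "fals T (Or a b) = (fals T a \<and> fals T b)"
| "fals T (Imp a b) = (sat T a \<and> fals T b)"
| "fals T (SNeg a) = sat T a"

(* reduct of nested expressions (Top = Neg Bot is covered by the Neg clause) *)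
fun reduct :: "'a lit set \<Rightarrow> 'a form \<Rightarrow> 'a form" where
  "reduct T Bot = Bot"
| "reduct T (Atom p) = Atom p"
| "reduct T (And F G) = And (reduct T F) (reduct T G)"
| "reduct T (Or F G) = Or (reduct T F) (reduct T G)"
| "reduct T (SNeg F) = SNeg (reduct T F)"
| "reduct T (Imp F Bot) = (if sat T F then Bot else Top)"
| "reduct T (Imp F G) = Imp (reduct T F) (reduct T G)" (* not a nested expression; irrelevant *)

(* transformations \<phi>^T_+ and \<phi>^T_- ; clauses for Neg take priority over Imp *)
fun tplus :: "'a lit set \<Rightarrow> 'a form \<Rightarrow> 'a form"
and tminus :: "'a lit set \<Rightarrow> 'a form \<Rightarrow> 'a form" where
  "tplus T Bot = Bot"
| "tplus T (Atom p) = (if sat T (Atom p) then Atom p else Bot)"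
| "tplus T (And a b) = (if sat T (And a b) then And (tplus T a) (tplus T b) else Bot)"
| "tplus T (Or a b) = (if sat T (Or a b) then Or (tplus T a) (tplus T b) else Bot)"
| "tplus T (Imp a Bot) = (if sat T (Imp a Bot) then Neg (tplus T a) else Bot)"
| "tplus T (Imp a b) = (if sat T (Imp a b) then Or (Neg (tplus T a)) (tplus T b) else Bot)"
| "tplus T (SNeg a) = (if sat T (SNeg a) then SNeg (tminus T a) else Bot)"
| "tminus T Bot = Bot"
| "tminus T (Atom p) = (if fals T (Atom p) then Atom p else Top)"
| "tminus T (And a b) = (if fals T (And a b) then And (tminus T a) (tminus T b) else Top)"
| "tminus T (Or a b) = (if fals T (Or a b) then Or (tminus T a) (tminus T b) else Top)"
| "tminus T (Imp a Bot) = (if fals T (Imp a Bot) then Bot else Top)"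
| "tminus T (Imp a b) = (if fals T (Imp a b) then tminus T b else Top)"
| "tminus T (SNeg a) = (if fals T (SNeg a) then SNeg (tplus T a) else Top)"

end

theory Submission
  imports Defs
begin

text \<open>The transformations are designed so that
  \<open>F\<^sup>T\<^sub>+\<close> collapses to \<open>\<bottom>\<close> when \<open>T \<not>\<Turnstile> F\<close> and \<open>F\<^sup>T\<^sub>-\<close> collapses to \<open>\<top>\<close> when \<open>T\<close> does not
  falsify \<open>F\<close>; hence \<open>H \<Turnstile> F\<^sup>T\<^sub>+\<close> already forces \<open>T \<Turnstile> F\<close>, and dually for falsification.
  With this, every connective is routine except negation, where the reduct is the constant
  \<open>\<bottom>\<close> or \<open>\<top>\<close> decided by \<open>T\<close>, matching \<open>(\<not>F)\<^sup>T\<^sub>+ = \<not>(F\<^sup>T\<^sub>+)\<close> exactly because of that collapse.\<close>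

lemma sat_Neg [simp]: "sat T (Neg \<phi>) \<longleftrightarrow> \<not> sat T \<phi>"
  by (simp add: Neg_def)

lemma fals_Neg [simp]: "fals T (Neg \<phi>) \<longleftrightarrow> sat T \<phi>"
  by (simp add: Neg_def)

lemma sat_Top [simp]: "sat T Top"
  by (simp add: Top_def)

lemma not_fals_Top [simp]: "\<not> fals T Top"
  by (simp add: Top_def)

lemma reduct_Neg [simp]: "reduct T (Neg \<phi>) = (if sat T \<phi> then Bot else Top)"
  by (simp add: Neg_def)

lemma tplus_Neg [simp]: "tplus T (Neg \<phi>) = (if sat T \<phi> then Bot else Neg (tplus T \<phi>))"
  by (simp add: Neg_def)

lemma tminus_Neg [simp]: "tminus T (Neg \<phi>) = (if sat T \<phi> then Bot else Top)"
  by (simp add: Neg_def)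

lemma tplus_eq_Bot_if_not_sat: "\<not> sat T \<phi> \<Longrightarrow> tplus T \<phi> = Bot"
proof (cases \<phi>)
  case (Imp a b)
  then show "\<not> sat T \<phi> \<Longrightarrow> tplus T \<phi> = Bot" by (cases b) auto
qed auto

lemma tminus_eq_Top_if_not_fals: "\<not> fals T \<phi> \<Longrightarrow> tminus T \<phi> = Top"
proof (cases \<phi>)
  case (Imp a b)
  then show "\<not> fals T \<phi> \<Longrightarrow> tminus T \<phi> = Top" by (cases b) auto
qed auto

lemma sat_if_sat_tplus: "sat H (tplus T \<phi>) \<Longrightarrow> sat T \<phi>"
  using tplus_eq_Bot_if_not_sat by fastforce

lemma fals_if_fals_tminus: "fals H (tminus T \<phi>) \<Longrightarrow> fals T \<phi>"
  using tminus_eq_Top_if_not_fals by fastforce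

lemma sat_fals_reduct_iff:
  assumes "nested F" and "H \<subseteq> T"
  shows "(sat H (reduct T F) \<longleftrightarrow> sat T F \<and> sat H (tplus T F))
       \<and> (fals H (reduct T F) \<longleftrightarrow> fals T F \<and> fals H (tminus T F))"
  using assms
proof (induction F)
  case (Imp F G)
  then have "Imp F G = Neg F" by (simp add: Neg_def)
  then show ?case by (simp add: tplus_eq_Bot_if_not_sat)
qed (auto dest: sat_if_sat_tplus fals_if_fals_tminus)

theorem corollary2:
  fixes F :: "'a form" and H T :: "'a lit set"
  assumes "nested F" and "consistent H" and "consistent T" and "H \<subseteq> T"
  shows "(sat H (reduct T F) \<longleftrightarrow> sat T F \<and> sat H (tplus T F))
       \<and> (fals H (reduct T F) \<longleftrightarrow> fals T F \<and> fals H (tminus T F))"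
  using sat_fals_reduct_iff assms(1,4) .

end
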